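(* The Tuza constants satisfy $c_7 \le 0.1916$, $c_8 \le 0.1772$, and $c_k \le 0.1667$ for every integer $k$ with $9 \le k \le 17$.
   Context: A hypergraph $H=(V,E)$ consists of a finite vertex set $V$ and a finite collection $E$ of subsets of $V$ (edges). $H$ is $k$-uniform if every edge has exactly $k$ vertices. A transversal of $H$ is a set $T\subseteq V$ meeting every edge; $\tau(H)$ denotes the minimum size of a transversal. For $k\ge 1$, the Tuza constant is $c_k=\sup_{H} \tau(H)/(m+n)$, where the supremum ranges over all $k$-uniform hypergraphs $H$, with $n=|V|$ and $m=|E|$. *)

theory Defs
  imports Complex_Main
begin

definition hypergraph :: "'a set \<Rightarrow> 'a set set \<Rightarrow> bool" where
  "hypergraph V E \<longleftrightarrow> finite V \<and> E \<subseteq> Pow V"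

definition k_uniform :: "nat \<Rightarrow> 'a set \<Rightarrow> 'a set set \<Rightarrow> bool" where
  "k_uniform k V E \<longleftrightarrow> hypergraph V E \<and> (\<forall>e\<in>E. card e = k)"

definition transversal :: "'a set \<Rightarrow> 'a set set \<Rightarrow> 'a set \<Rightarrow> bool" where
  "transversal V E T \<longleftrightarrow> T \<subseteq> V \<and> (\<forall>e\<in>E. T \<inter> e \<noteq> {})"

definition tau :: "'a set \<Rightarrow> 'a set set \<Rightarrow> nat" where
  "tau V E = (LEAST t. \<exists>T. transversal V E T \<and> card T = t)"

text \<open>Tuza constant: supremum of tau/(m+n) over all k-uniform hypergraphs.
  Vertices are taken from nat, which loses no generality (every finite hypergraph
  is isomorphic to one on natural numbers).\<close>
definition tuza_const :: "nat \<Rightarrow> real" where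
  "tuza_const k = Sup {real (tau V E) / real (card E + card V) | (V :: nat set) E.
                        k_uniform k V E}"

end

theory Submission
  imports Defs "HOL-Analysis.Harmonic_Numbers"
begin

text \<open>The greedy algorithm (repeatedly take a vertex of maximum degree) yields
  Lovasz's bound \<open>k \<cdot> \<tau>(H) \<le> \<Sum>\<^sub>v H(d(v))\<close>, with \<open>H\<close> the harmonic numbers: removing a vertex
  of degree \<open>D\<close> deletes \<open>D\<close> edges, i.e. \<open>kD\<close> vertex incidences, and each lost incidence
  lowers \<open>\<Sum>\<^sub>v H(d(v))\<close> by at least \<open>1/D\<close>. If \<open>H(d) \<le> c (k + d)\<close> for all \<open>d\<close>, then, as
  \<open>\<Sum>\<^sub>v d(v) = k m\<close>, this gives \<open>\<tau> \<le> c (n + m)\<close>. Since \<open>H\<close> grows by \<open>1/(d+1) \<le> c\<close> once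
  \<open>d \<ge> 5\<close> and \<open>c \<ge> 1/6\<close>, the inequality need only be checked for \<open>d \<le> 5\<close>.\<close>

definition degree :: "'a set set \<Rightarrow> 'a \<Rightarrow> nat" where
  "degree E v = card {e\<in>E. v \<in> e}"

lemma sum_degree:
  assumes "finite V" "finite E" "\<forall>e\<in>E. e \<subseteq> V"
  shows "(\<Sum>v\<in>V. degree E v) = (\<Sum>e\<in>E. card e)"
proof -
  have "(\<Sum>v\<in>V. degree E v) = (\<Sum>v\<in>V. \<Sum>e\<in>E. if v \<in> e then 1 else 0)"
    using assms by (simp add: degree_def sum.inter_filter[symmetric])
  also have "\<dots> = (\<Sum>e\<in>E. \<Sum>v\<in>V. if v \<in> e then 1 else 0)"
    by (rule sum.swap)
  also have "\<dots> = (\<Sum>e\<in>E. card {v\<in>V. v \<in> e})"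
    using assms by (simp add: sum.inter_filter[symmetric])
  also have "\<dots> = (\<Sum>e\<in>E. card e)"
    using assms by (intro sum.cong refl arg_cong[where f = card]) auto
  finally show ?thesis .
qed

lemma degree_diff:
  assumes "finite E" "F \<subseteq> E"
  shows "degree E v = degree (E - F) v + degree F v"
proof -
  have "{e\<in>E. v \<in> e} = {e\<in>E - F. v \<in> e} \<union> {e\<in>F. v \<in> e}"
    using assms(2) by auto
  moreover have "finite F" using assms finite_subset by blast
  ultimately show ?thesis
    unfolding degree_def using assms(1) by (subst card_Un_disjoint[symmetric]) auto
qed

lemma harm_diff_ge:
  assumes "b \<le> a" "a \<le> D"
  shows "(real a - real b) / real D \<le> harm a - harm b"
proof -
  have "harm a - harm b = (\<Sum>i\<in>{b..<a}. inverse (real (Suc i)))"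
    using sum.atLeastLessThan_concat[of 0 b a "\<lambda>i. inverse (real (Suc i))"] assms(1)
    by (simp add: harm_altdef atLeast0LessThan)
  moreover have "(\<Sum>i\<in>{b..<a}. 1 / real D) \<le> (\<Sum>i\<in>{b..<a}. inverse (real (Suc i)))"
    using assms(2) by (intro sum_mono) (auto simp: inverse_eq_divide frac_le)
  moreover have "(\<Sum>i\<in>{b..<a}. 1 / real D) = (real a - real b) / real D"
    by (simp add: of_nat_diff[OF assms(1)])
  ultimately show ?thesis by linarith
qed

lemma sum_harm_degree_decrease:
  assumes "finite V" "E \<subseteq> Pow V" "\<forall>e\<in>E. card e = k"
    and max: "\<forall>u\<in>V. degree E u \<le> degree E v" and pos: "0 < degree E v"
  shows "real k \<le> (\<Sum>u\<in>V. harm (degree E u)) - (\<Sum>u\<in>V. harm (degree (E - {e\<in>E. v \<in> e}) u))"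
proof -
  define F where "F = {e\<in>E. v \<in> e}"
  define D where "D = degree E v"
  have finE: "finite E" using assms(1,2) finite_subset by blast
  have "(\<Sum>u\<in>V. degree F u) = (\<Sum>e\<in>F. card e)"
    using assms(1,2) finE by (intro sum_degree) (auto simp: F_def)
  also have "\<dots> = D * k"
    using assms(3) by (simp add: F_def D_def degree_def)
  finally have "(\<Sum>u\<in>V. real (degree F u)) = real D * real k"
    by (simp flip: of_nat_sum)
  then have "real k = (\<Sum>u\<in>V. real (degree F u) / real D)"
    using pos by (simp add: D_def flip: sum_divide_distrib)
  also have "\<dots> \<le> (\<Sum>u\<in>V. harm (degree E u) - harm (degree (E - F) u))"
  proof (intro sum_mono)
    fix u assume "u \<in> V"
    have split: "degree E u = degree (E - F) u + degree F u"
      using finE by (intro degree_diff) (auto simp: F_def)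
    have "degree E u \<le> D"
      using max \<open>u \<in> V\<close> by (simp add: D_def)
    with split show "real (degree F u) / real D \<le> harm (degree E u) - harm (degree (E - F) u)"
      using harm_diff_ge[of "degree (E - F) u" "degree E u" D] by simp
  qed
  finally show ?thesis by (simp add: F_def sum_subtractf)
qed

lemma greedy_transversal:
  assumes "finite V" "E \<subseteq> Pow V" "\<forall>e\<in>E. card e = k" "0 < k"
  shows "\<exists>T. transversal V E T \<and> real k * real (card T) \<le> (\<Sum>v\<in>V. harm (degree E v))"
  using assms
proof (induction "card E" arbitrary: E rule: less_induct)
  case less
  have finE: "finite E" using less.prems(1,2) finite_subset by blast
  show ?case
  proof (cases "E = {}")
    case True
    then have "transversal V E {}" by (simp add: transversal_def)
    then show ?thesis by (intro exI[of _ "{}"]) (simp add: sum_nonneg harm_nonneg)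
  next
    case False
    then obtain e0 where e0: "e0 \<in> E" by blast
    then have "e0 \<noteq> {}" using less.prems(3,4) by auto
    then obtain u0 where u0: "u0 \<in> e0" by blast
    have u0V: "u0 \<in> V" using e0 u0 less.prems(2) by auto
    have "Max (degree E ` V) \<in> degree E ` V"
      using less.prems(1) u0V by (intro Max_in) auto
    then obtain v where vV: "v \<in> V" and v_max: "degree E v = Max (degree E ` V)"
      by auto
    have max: "\<forall>u\<in>V. degree E u \<le> degree E v"
      using v_max less.prems(1) by simp
    have "0 < degree E u0"
      using e0 u0 finE by (auto simp: degree_def card_gt_0_iff)
    then have pos: "0 < degree E v" using max u0V by (meson less_le_trans)
    define E' where "E' = E - {e\<in>E. v \<in> e}"
    have "{e\<in>E. v \<in> e} \<noteq> {}"
      using pos unfolding degree_def by (metis card.empty less_irrefl)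
    then have "E' \<subset> E"
      unfolding E'_def by blast
    then have "card E' < card E" using finE by (intro psubset_card_mono)
    moreover have "E' \<subseteq> Pow V" "\<forall>e\<in>E'. card e = k"
      using less.prems(2,3) by (auto simp: E'_def)
    ultimately obtain T' where T': "transversal V E' T'"
      and T'_bound: "real k * real (card T') \<le> (\<Sum>u\<in>V. harm (degree E' u))"
      using less.hyps[of E'] less.prems(1,4) by blast
    have drop: "real k \<le> (\<Sum>u\<in>V. harm (degree E u)) - (\<Sum>u\<in>V. harm (degree E' u))"
      unfolding E'_def by (rule sum_harm_degree_decrease[OF less.prems(1-3) max pos])
    have "finite T'" using T' less.prems(1) finite_subset by (auto simp: transversal_def)
    then have "card (insert v T') \<le> card T' + 1" by (simp add: card_insert_if)
    then have "real k * real (card (insert v T')) \<le> real k * (real (card T') + 1)"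
      by (intro mult_left_mono) auto
    also have "\<dots> \<le> (\<Sum>u\<in>V. harm (degree E u))"
      using T'_bound drop by (simp add: distrib_left)
    finally have "real k * real (card (insert v T')) \<le> (\<Sum>u\<in>V. harm (degree E u))" .
    moreover have "transversal V E (insert v T')"
      using T' vV by (auto simp: transversal_def E'_def)
    ultimately show ?thesis by blast
  qed
qed

lemma tau_le_card:
  assumes "transversal V E T"
  shows "tau V E \<le> card T"
  unfolding tau_def using assms by (intro Least_le) blast

lemma tuza_const_le:
  assumes "0 < k" "0 \<le> c" and harm_le: "\<And>d. harm d \<le> c * (real k + real d)"
  shows "tuza_const k \<le> c"
  unfolding tuza_const_def
proof (rule cSup_least)
  have "k_uniform k ({}::nat set) {}" by (simp add: k_uniform_def hypergraph_def)
  then show "{real (tau V E) / real (card E + card V) | (V :: nat set) E. k_uniform k V E} \<noteq> {}"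
    by blast
next
  fix x assume "x \<in> {real (tau V E) / real (card E + card V) | (V :: nat set) E. k_uniform k V E}"
  then obtain V :: "nat set" and E where x: "x = real (tau V E) / real (card E + card V)"
    and "k_uniform k V E" by blast
  then have finV: "finite V" and EV: "E \<subseteq> Pow V" and card_e: "\<forall>e\<in>E. card e = k"
    by (auto simp: k_uniform_def hypergraph_def)
  have finE: "finite E" using finV EV finite_subset by blast
  obtain T where "transversal V E T"
    and T_bound: "real k * real (card T) \<le> (\<Sum>v\<in>V. harm (degree E v))"
    using greedy_transversal[OF finV EV card_e \<open>0 < k\<close>] by blast
  then have "real k * real (tau V E) \<le> (\<Sum>v\<in>V. harm (degree E v))"
    using tau_le_card \<open>0 < k\<close> by (meson mult_left_mono of_nat_0_le_iff of_nat_le_iff order.trans)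
  also have "\<dots> \<le> (\<Sum>v\<in>V. c * (real k + real (degree E v)))"
    using harm_le by (intro sum_mono) auto
  also have "\<dots> = c * (real k * real (card V) + real (\<Sum>v\<in>V. degree E v))"
    by (simp add: sum.distrib sum_distrib_left algebra_simps)
  also have "(\<Sum>v\<in>V. degree E v) = card E * k"
    using sum_degree[of V E] finV finE EV card_e by auto
  finally have "real k * real (tau V E) \<le> real k * (c * real (card E + card V))"
    by (simp add: algebra_simps)
  then have tau_le: "real (tau V E) \<le> c * real (card E + card V)"
    using \<open>0 < k\<close> by simp
  show "x \<le> c"
  proof (cases "card E + card V = 0")
    case True
    then show ?thesis using x \<open>0 \<le> c\<close> by simp
  next
    case False
    then have "0 < real (card E + card V)" by linarith
    then show ?thesis using x tau_le by (metis pos_divide_le_eq)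
  qed
qed

lemma harm_le_linear:
  assumes "1 / real (Suc m) \<le> c" and small: "\<And>d. d \<le> m \<Longrightarrow> harm d \<le> c * (real k + real d)"
  shows "harm d \<le> c * (real k + real d)"
proof (induction d)
  case 0
  then show ?case using small[of 0] by simp
next
  case (Suc d)
  show ?case
  proof (cases "Suc d \<le> m")
    case True
    then show ?thesis by (rule small)
  next
    case False
    then have "inverse (real (Suc d)) \<le> inverse (real (Suc m))"
      by (intro le_imp_inverse_le) auto
    also have "\<dots> \<le> c"
      using assms(1) by (simp add: inverse_eq_divide)
    finally show ?thesis
      using Suc.IH by (simp add: harm_Suc algebra_simps)
  qed
qed

lemma tuza_const_le_of_harm_le_upto_5:
  assumes "0 < k" "1/6 \<le> c" and small: "\<forall>d\<in>{0,1,2,3,4,5}. harm d \<le> c * (real k + real d)"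
  shows "tuza_const k \<le> c"
proof (rule tuza_const_le)
  show "0 \<le> c" using assms(2) by linarith
  show "harm d \<le> c * (real k + real d)" for d
  proof (rule harm_le_linear[of 5])
    show "1 / real (Suc 5) \<le> c" using assms(2) by simp
    show "harm d \<le> c * (real k + real d)" if "d \<le> 5" for d
    proof -
      have "d \<in> {0,1,2,3,4,5}" using that by auto
      then show ?thesis using small by blast
    qed
  qed
qed (rule assms(1))

lemma harm_upto_5:
  "harm 0 = 0" "harm (Suc 0) = 1" "harm 2 = 3/2" "harm 3 = 11/6" "harm 4 = 25/12" "harm 5 = 137/60"
  by (simp_all add: harm_def eval_nat_numeral)

theorem theorem1:
  shows "tuza_const 7 \<le> 0.1916 \<and> tuza_const 8 \<le> 0.1772 \<and>
         (\<forall>k::nat. 9 \<le> k \<and> k \<le> 17 \<longrightarrow> tuza_const k \<le> 0.1667)"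
proof (intro conjI allI impI)
  show "tuza_const 7 \<le> 0.1916"
    by (rule tuza_const_le_of_harm_le_upto_5) (simp_all add: harm_upto_5)
  show "tuza_const 8 \<le> 0.1772"
    by (rule tuza_const_le_of_harm_le_upto_5) (simp_all add: harm_upto_5)
next
  fix k :: nat
  assume "9 \<le> k \<and> k \<le> 17"
  then have "0.1667 * (real 9 + real d) \<le> 0.1667 * (real k + real d)" for d :: nat
    by simp
  moreover have "\<forall>d\<in>{0,1,2,3,4,5}. harm d \<le> 0.1667 * (real 9 + real d)"
    by (simp add: harm_upto_5)
  ultimately have "\<forall>d\<in>{0,1,2,3,4,5}. harm d \<le> 0.1667 * (real k + real d)"
    by (meson order.trans)
  with \<open>9 \<le> k \<and> k \<le> 17\<close> show "tuza_const k \<le> 0.1667"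
    by (intro tuza_const_le_of_harm_le_upto_5) simp_all
qed

end
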